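(* Let $a\in\mathbf F^{\uparrow}$ with $\mathrm{supp}(a)=(0,r)$, let $\alpha_0\in(0,r)\cap A$, $\alpha_k=(\alpha_0)a^k$ ($k\in\mathbb Z$), and $b\in\mathbf F^{\uparrow}$ with $\mathrm{supp}(b)=(\alpha_0,\alpha_1)$. Let $d\in\mathbf F_{(\alpha_0,\alpha_1)}$ be such that the centralizer of $b$ in $\mathbf F_{(\alpha_0,\alpha_1)}$ equals $\langle d\rangle$. Then the centralizer of the set $\{a^{-k}ba^k\mid k\in\mathbb Z\}$ in $\mathbf F$ is the subgroup generated by $\{a^{-k}da^k\mid k\in\mathbb Z\}$.
   Context: Maps act on the right. Fix real $r>0$, a subgroup $\Lambda\neq\{1\}$ of $\mathbb R^*_+$, and an additive subgroup $A\subseteq\mathbb R$ with $r\in A$ and $\lambda A\subseteq A$ for $\lambda\in\Lambda$. $\mathbf F=\mathbf F(r,\Lambda,A)$ is the group of homeomorphisms $x\colon[0,r)\to[0,r)$ that are piecewise affine with finitely many breakpoints, all slopes in $\Lambda$, and all breakpoints and their images in $A$. $\mathbf F^{\uparrow}=\{x\in\mathbf F\mid(\gamma)x\ge\gamma\ \forall\gamma\}$; $\mathrm{supp}(x)$ is the set of non-fixed points; for $S\subseteq[0,r)$, $\mathbf F_S=\{x\in\mathbf F\mid\mathrm{supp}(x)\subseteq S\}$. *)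

theory Defs
  imports "HOL-Analysis.Analysis" "HOL-Algebra.Generated_Groups"
begin

text \<open>Elements of F(r,Lambda,A) are represented as functions real => real which are the
identity outside [0,r).  A finite set P of cut points (containing 0, contained in A and [0,r),
with images in A) is given such that on each interval [p, next point of P) the map is affine
with slope in Lambda.  The true breakpoints form a subset of such a P.\<close>

definition PLF :: "real \<Rightarrow> real set \<Rightarrow> real set \<Rightarrow> (real \<Rightarrow> real) set" where
  "PLF r \<Lambda> A = {x.
     (\<exists>y. homeomorphism {0..<r} {0..<r} x y) \<and>
     (\<forall>t. t \<notin> {0..<r} \<longrightarrow> x t = t) \<and>
     (\<exists>P. finite P \<and> P \<subseteq> A \<inter> {0..<r} \<and> 0 \<in> P \<and> x ` P \<subseteq> A \<and>
        (\<forall>p\<in>P. \<exists>l\<in>\<Lambda>. \<forall>t\<in>{p..<r}. (\<forall>q\<in>P. q \<le> p \<or> t < q) \<longrightarrow> x t = x p + l * (t - p)))}"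

text \<open>Maps act on the right: the product x y means first x, then y, i.e. y \<circ> x.\<close>
definition PLFgroup :: "real \<Rightarrow> real set \<Rightarrow> real set \<Rightarrow> (real \<Rightarrow> real) monoid" where
  "PLFgroup r \<Lambda> A = \<lparr>carrier = PLF r \<Lambda> A, mult = (\<lambda>x y. y \<circ> x), one = id\<rparr>"

definition supp :: "(real \<Rightarrow> real) \<Rightarrow> real set" where
  "supp x = {t. x t \<noteq> t}"

definition PLF_up :: "real \<Rightarrow> real set \<Rightarrow> real set \<Rightarrow> (real \<Rightarrow> real) set" where
  "PLF_up r \<Lambda> A = {x \<in> PLF r \<Lambda> A. \<forall>t\<in>{0..<r}. x t \<ge> t}"

definition PLF_on :: "real \<Rightarrow> real set \<Rightarrow> real set \<Rightarrow> real set \<Rightarrow> (real \<Rightarrow> real) set" where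
  "PLF_on r \<Lambda> A S = {x \<in> PLF r \<Lambda> A. supp x \<subseteq> S}"

definition centralizer :: "('a, 'b) monoid_scheme \<Rightarrow> 'a set \<Rightarrow> 'a set \<Rightarrow> 'a set" where
  "centralizer G H X = {g \<in> H. \<forall>x\<in>X. g \<otimes>\<^bsub>G\<^esub> x = x \<otimes>\<^bsub>G\<^esub> g}"

end

theory Submission
  imports Defs
begin

text \<open>
  Notation: G is the group F(r, Lambda, A), acting on the right, so that the product x y is the
  composition y \<circ> x; the orbit points are alpha_k = (alpha_0) a^k, and
  B_k = a^-k b a^k, D_k = a^-k d a^k.

  Since supp B_k = (alpha_k, alpha_(k+1)) and these intervals are pairwise
  disjoint, distinct conjugates B_j, D_k commute, and D_k commutes with B_k because d commutes
  with b; hence every element of the group generated by the D_k centralizes all B_k.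
  Conversely, let c centralize all B_k.  Commuting with B_k, c preserves supp B_k, so c fixes
  every alpha_k.  The alpha_k accumulate at 0 and at r, where c is affine; fixing infinitely
  many points there forces c to be the identity near 0 and near r.  Thus c is a finite product
  of its restrictions c_j to the intervals [alpha_j, alpha_(j+1)).  Each c_j commutes with B_j;
  conjugating by a^j moves it into the centralizer of b in F_(alpha_0, alpha_1), which is
  generated by d, so c_j lies in the group generated by D_j.
\<close>

section \<open>Supports and restrictions of real functions\<close>

definition piece :: "real \<Rightarrow> real \<Rightarrow> (real \<Rightarrow> real) \<Rightarrow> real \<Rightarrow> real" where
  "piece u v c = (\<lambda>t. if u \<le> t \<and> t < v then c t else t)"

lemma supp_self_map: "inj f \<Longrightarrow> t \<in> supp f \<Longrightarrow> f t \<in> supp f"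
  unfolding supp_def by (auto dest: injD)

lemma disjoint_supp_commute:
  fixes f g :: "real \<Rightarrow> real"
  assumes "inj f" "inj g" "supp f \<inter> supp g = {}"
  shows "f \<circ> g = g \<circ> f"
proof
  fix t
  show "(f \<circ> g) t = (g \<circ> f) t"
  proof (cases "t \<in> supp f")
    case True
    then have "g t = t" "g (f t) = f t"
      using assms(3) supp_self_map[OF assms(1) True] unfolding supp_def by auto
    then show ?thesis by simp
  next
    case False
    then have ft: "f t = t" unfolding supp_def by auto
    show ?thesis
    proof (cases "t \<in> supp g")
      case True
      then have "f (g t) = g t" using assms(3) supp_self_map[OF assms(2) True] unfolding supp_def by auto
      then show ?thesis using ft by simp
    next
      case False
      then show ?thesis using ft unfolding supp_def by auto
    qed
  qed
qed

lemma commuting_preserves_supp: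
  fixes c f :: "real \<Rightarrow> real"
  assumes "inj c" "f \<circ> c = c \<circ> f"
  shows "c t \<in> supp f \<longleftrightarrow> t \<in> supp f"
proof -
  have "f (c t) = c (f t)" using assms(2) by (metis comp_apply)
  then show ?thesis unfolding supp_def using inj_eq[OF assms(1)] by simp
qed

lemma supp_conjugate:
  fixes f h h' :: "real \<Rightarrow> real"
  assumes "\<And>t. h (h' t) = t" "\<And>t. h' (h t) = t"
  shows "t \<in> supp (h \<circ> f \<circ> h') \<longleftrightarrow> h' t \<in> supp f"
proof -
  have "h (f (h' t)) = t \<longleftrightarrow> f (h' t) = h' t"
  proof
    assume "h (f (h' t)) = t"
    then have "h' (h (f (h' t))) = h' t" by simp
    then show "f (h' t) = h' t" using assms(2) by simp
  qed (use assms(1) in simp)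
  then show ?thesis unfolding supp_def by simp
qed

lemma invariant_interval_not_right:
  fixes c c' :: "real \<Rightarrow> real"
  assumes sm: "strict_mono c" and cc': "\<And>t. c (c' t) = t" and uv: "u < v"
    and inv: "\<And>t. c t \<in> {u<..<v} \<longleftrightarrow> t \<in> {u<..<v}"
  shows "\<not> u < c u"
proof
  assume cu: "u < c u"
  define t where "t = (u + min (c u) v) / 2"
  have t: "u < t" "t < v" "t < c u" using cu uv by (auto simp: t_def)
  then have "c' t \<in> {u<..<v}" using inv[of "c' t"] cc' by simp
  then have "c u < c (c' t)" using sm strict_monoD by auto
  then show False using cc' t by simp
qed

lemma invariant_interval_fixes_end:
  fixes c c' :: "real \<Rightarrow> real"
  assumes sm: "strict_mono c" and sm': "strict_mono c'" and cc': "\<And>t. c (c' t) = t"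
    and c'c: "\<And>t. c' (c t) = t" and uv: "u < v"
    and inv: "\<And>t. c t \<in> {u<..<v} \<longleftrightarrow> t \<in> {u<..<v}"
  shows "c u = u"
proof -
  have inv': "c' t \<in> {u<..<v} \<longleftrightarrow> t \<in> {u<..<v}" for t using inv[of "c' t"] cc'[of t] by simp
  have "\<not> u < c u" by (rule invariant_interval_not_right[OF sm cc' uv inv])
  moreover have "\<not> u < c' u" by (rule invariant_interval_not_right[OF sm' c'c uv inv'])
  then have "\<not> c u < u" using strict_mono_less[OF sm', of "c u" u] c'c by simp
  ultimately show ?thesis by simp
qed

lemma strict_mono_maps_interval:
  fixes c :: "real \<Rightarrow> real"
  assumes "strict_mono c" "c u = u" "c v = v" "u \<le> t" "t < v"
  shows "u \<le> c t \<and> c t < v"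
  using assms strict_mono_less_eq[OF assms(1), of u t] strict_mono_less[OF assms(1), of t v] by simp

lemma supp_piece: "c u = u \<Longrightarrow> supp (piece u v c) \<subseteq> {u<..<v}"
  unfolding supp_def piece_def by (auto simp: less_le)

lemma piece_inverse:
  fixes c c' :: "real \<Rightarrow> real"
  assumes "strict_mono c'" "c' u = u" "c' v = v" "\<And>t. c (c' t) = t"
  shows "piece u v c (piece u v c' t) = t"
  using strict_mono_maps_interval[OF assms(1-3), of t] assms(4)[of t] unfolding piece_def by auto

lemma piece_continuous:
  fixes c :: "real \<Rightarrow> real"
  assumes c: "continuous_on S c" and cu: "c u = u" and cv: "c v = v" and uv: "u \<le> v"
  shows "continuous_on S (piece u v c)"
proof -
  define F where "F t = (if t \<le> v then c t else t)" for t
  have cF: "continuous_on {t \<in> S. u \<le> t} F"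
    unfolding F_def
  proof (rule continuous_on_cases_le[where h="\<lambda>t. t" and a=v])
    show "continuous_on {x \<in> {t \<in> S. u \<le> t}. x \<le> v} c" by (rule continuous_on_subset[OF c]) auto
    show "continuous_on {x \<in> {t \<in> S. u \<le> t}. v \<le> x} (\<lambda>x. x)" by (rule continuous_on_id)
    show "continuous_on {t \<in> S. u \<le> t} (\<lambda>t. t)" by (rule continuous_on_id)
    show "\<And>x. x \<in> {t\<in>S. u\<le>t} \<Longrightarrow> x = v \<Longrightarrow> c x = x" using cv by simp
  qed
  have "continuous_on S (\<lambda>t. if t \<le> u then t else F t)"
  proof (rule continuous_on_cases_le[where h="\<lambda>t. t" and a=u])
    show "continuous_on {x \<in> S. x \<le> u} (\<lambda>x. x)" by (rule continuous_on_id)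
    show "continuous_on {x \<in> S. u \<le> x} F" by (rule cF)
    show "continuous_on S (\<lambda>t. t)" by (rule continuous_on_id)
    show "\<And>x. x \<in> S \<Longrightarrow> x = u \<Longrightarrow> x = F x" using cu uv by (simp add: F_def)
  qed
  moreover have "(\<lambda>t. if t \<le> u then t else F t) = piece u v c"
    unfolding piece_def F_def using cu cv uv by (intro ext) auto
  ultimately show ?thesis by (simp only:)
qed

lemma piece_commute:
  fixes f c :: "real \<Rightarrow> real"
  assumes inj: "inj f" and supp: "supp f \<subseteq> {u<..<v}" and comm: "f \<circ> c = c \<circ> f"
  shows "f \<circ> piece u v c = piece u v c \<circ> f"
proof
  fix t
  show "(f \<circ> piece u v c) t = (piece u v c \<circ> f) t"
  proof (cases "u \<le> t \<and> t < v")
    case True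
    have ft: "u \<le> f t \<and> f t < v"
    proof (cases "t \<in> supp f")
      case True
      then show ?thesis using supp supp_self_map[OF inj True] by auto
    next
      case False
      then show ?thesis using \<open>u \<le> t \<and> t < v\<close> unfolding supp_def by simp
    qed
    have "f (c t) = c (f t)" using comm by (metis comp_apply)
    then show ?thesis using True ft unfolding piece_def by simp
  next
    case False
    then have "f t = t" using supp unfolding supp_def by auto
    then show ?thesis using False unfolding piece_def by auto
  qed
qed

section \<open>Centralizers and conjugation in groups\<close>

lemma (in group) inv_cancel_left:
  assumes "x \<in> carrier G" "y \<in> carrier G"
  shows "x \<otimes> (inv x \<otimes> y) = y" "inv x \<otimes> (x \<otimes> y) = y"
  using assms by (simp_all add: m_assoc[symmetric])

lemma (in group) conj_commute_iff:
  assumes "g \<in> carrier G" "y \<in> carrier G" "z \<in> carrier G"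
  shows "(inv g \<otimes> y \<otimes> g) \<otimes> (inv g \<otimes> z \<otimes> g) = (inv g \<otimes> z \<otimes> g) \<otimes> (inv g \<otimes> y \<otimes> g)
    \<longleftrightarrow> y \<otimes> z = z \<otimes> y"
proof -
  have conj_mult: "(inv g \<otimes> x \<otimes> g) \<otimes> (inv g \<otimes> x' \<otimes> g) = inv g \<otimes> (x \<otimes> x') \<otimes> g"
    if "x \<in> carrier G" "x' \<in> carrier G" for x x'
    using that assms(1) by (simp add: m_assoc inv_cancel_left)
  show ?thesis using assms by (simp add: conj_mult)
qed

lemma (in group) centralizer_subgroup:
  assumes "Y \<subseteq> carrier G"
  shows "subgroup (centralizer G (carrier G) Y) G"
proof (rule subgroupI)
  show "centralizer G (carrier G) Y \<subseteq> carrier G" unfolding centralizer_def by auto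
  have "\<one> \<in> centralizer G (carrier G) Y" unfolding centralizer_def using assms by auto
  then show "centralizer G (carrier G) Y \<noteq> {}" by blast
next
  fix h assume "h \<in> centralizer G (carrier G) Y"
  then have h: "h \<in> carrier G" "\<And>x. x \<in> Y \<Longrightarrow> h \<otimes> x = x \<otimes> h" unfolding centralizer_def by auto
  have "inv h \<otimes> x = x \<otimes> inv h" if x: "x \<in> Y" for x
  proof -
    have "x \<in> carrier G" using x assms by auto
    then have "inv h \<otimes> (h \<otimes> x) \<otimes> inv h = inv h \<otimes> (x \<otimes> h) \<otimes> inv h" using h x by simp
    then show ?thesis using h(1) \<open>x \<in> carrier G\<close> by (simp add: m_assoc inv_cancel_left)
  qed
  then show "inv h \<in> centralizer G (carrier G) Y" using h(1) unfolding centralizer_def by auto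
next
  fix h1 h2
  assume "h1 \<in> centralizer G (carrier G) Y" "h2 \<in> centralizer G (carrier G) Y"
  then have h: "h1 \<in> carrier G" "h2 \<in> carrier G"
    "\<And>x. x \<in> Y \<Longrightarrow> h1 \<otimes> x = x \<otimes> h1" "\<And>x. x \<in> Y \<Longrightarrow> h2 \<otimes> x = x \<otimes> h2"
    unfolding centralizer_def by auto
  have "h1 \<otimes> h2 \<otimes> x = x \<otimes> (h1 \<otimes> h2)" if x: "x \<in> Y" for x
  proof -
    have xc: "x \<in> carrier G" using x assms by auto
    have "h1 \<otimes> h2 \<otimes> x = h1 \<otimes> (x \<otimes> h2)" using h x xc by (simp add: m_assoc)
    also have "\<dots> = x \<otimes> h1 \<otimes> h2" using h x xc by (simp add: m_assoc[symmetric])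
    finally show ?thesis using h xc by (simp add: m_assoc)
  qed
  then show "h1 \<otimes> h2 \<in> centralizer G (carrier G) Y" using h unfolding centralizer_def by auto
qed

lemma (in group) conj_generate:
  assumes "g \<in> carrier G" "d \<in> carrier G" "e \<in> generate G {d}"
  shows "inv g \<otimes> e \<otimes> g \<in> generate G {inv g \<otimes> d \<otimes> g}"
  using assms(3)
proof (induction rule: generate.induct)
  case one
  then show ?case using assms by (simp add: generate.one)
next
  case (incl h)
  then show ?case by (auto intro: generate.incl)
next
  case (inv h)
  then have "inv g \<otimes> inv h \<otimes> g = inv (inv g \<otimes> h \<otimes> g)"
    using assms by (simp add: inv_mult_group m_assoc)
  then show ?case using generate.inv[of "inv g \<otimes> h \<otimes> g" "{inv g \<otimes> d \<otimes> g}" G] inv.hyps by auto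
next
  case (eng h1 h2)
  have "h1 \<in> carrier G" "h2 \<in> carrier G"
    using eng.hyps generate_in_carrier[of "{d}"] assms by auto
  then have "inv g \<otimes> (h1 \<otimes> h2) \<otimes> g = (inv g \<otimes> h1 \<otimes> g) \<otimes> (inv g \<otimes> h2 \<otimes> g)"
    using assms by (simp add: m_assoc inv_cancel_left)
  then show ?case using generate.eng[OF eng.IH] by simp
qed


section \<open>The group F(r, Lambda, A)\<close>

locale plf =
  fixes r :: real and \<Lambda> A :: "real set"
  assumes r_pos: "r > 0"
    and Lam_pos: "\<Lambda> \<subseteq> {0<..}" and Lam_one: "1 \<in> \<Lambda>"
    and Lam_mult: "\<And>l m. l \<in> \<Lambda> \<Longrightarrow> m \<in> \<Lambda> \<Longrightarrow> l * m \<in> \<Lambda>"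
    and Lam_inv: "\<And>l. l \<in> \<Lambda> \<Longrightarrow> inverse l \<in> \<Lambda>"
    and A_zero: "0 \<in> A"
    and A_add: "\<And>x y. x \<in> A \<Longrightarrow> y \<in> A \<Longrightarrow> x + y \<in> A"
    and A_uminus: "\<And>x. x \<in> A \<Longrightarrow> - x \<in> A"
    and A_scale: "\<And>l x. l \<in> \<Lambda> \<Longrightarrow> x \<in> A \<Longrightarrow> l * x \<in> A"
begin

abbreviation G :: "(real \<Rightarrow> real) monoid" where "G \<equiv> PLFgroup r \<Lambda> A"

definition cutset :: "(real \<Rightarrow> real) \<Rightarrow> real set \<Rightarrow> bool" where
  "cutset x P \<longleftrightarrow> finite P \<and> P \<subseteq> A \<inter> {0..<r} \<and> 0 \<in> P \<and> x ` P \<subseteq> A \<and>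
        (\<forall>p\<in>P. \<exists>l\<in>\<Lambda>. \<forall>t\<in>{p..<r}. (\<forall>q\<in>P. q \<le> p \<or> t < q) \<longrightarrow> x t = x p + l * (t - p))"

lemma PLF_iff: "x \<in> PLF r \<Lambda> A \<longleftrightarrow> (\<exists>y. homeomorphism {0..<r} {0..<r} x y) \<and>
     (\<forall>t. t \<notin> {0..<r} \<longrightarrow> x t = t) \<and> (\<exists>P. cutset x P)"
  unfolding PLF_def cutset_def by auto

lemma PLF_homeo: "x \<in> PLF r \<Lambda> A \<Longrightarrow> \<exists>y. homeomorphism {0..<r} {0..<r} x y"
  using PLF_iff by auto

lemma PLF_out: "x \<in> PLF r \<Lambda> A \<Longrightarrow> t \<notin> {0..<r} \<Longrightarrow> x t = t"
  using PLF_iff by auto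

lemma PLF_image: "x \<in> PLF r \<Lambda> A \<Longrightarrow> x ` {0..<r} = {0..<r}"
  using PLF_homeo unfolding homeomorphism_def by blast

lemma cut_below:
  assumes "cutset x P" "s \<in> {0..<r}"
  obtains p l where "p \<in> P" "p \<le> s" "l \<in> \<Lambda>"
    "\<And>t. t \<in> {s..<r} \<Longrightarrow> \<forall>q\<in>P. q \<le> s \<or> t < q \<Longrightarrow> x t = x p + l * (t - p)"
proof -
  let ?S = "{q\<in>P. q \<le> s}"
  have S: "finite ?S" "?S \<noteq> {}" using assms unfolding cutset_def by auto
  define p where "p = Max ?S"
  have p: "p \<in> P" "p \<le> s" "\<forall>q\<in>P. q \<le> s \<longrightarrow> q \<le> p"
    using Max_in[OF S] Max_ge[OF S(1)] unfolding p_def by auto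
  obtain l where l: "l \<in> \<Lambda>" "\<forall>t\<in>{p..<r}. (\<forall>q\<in>P. q \<le> p \<or> t < q) \<longrightarrow> x t = x p + l * (t - p)"
    using assms(1) p(1) unfolding cutset_def by blast
  show ?thesis
  proof (rule that[OF p(1,2) l(1)])
    fix t assume "t \<in> {s..<r}" "\<forall>q\<in>P. q \<le> s \<or> t < q"
    then show "x t = x p + l * (t - p)" using l(2) p by force
  qed
qed

lemma cut_local:
  assumes "cutset x P" "s \<in> {0..<r}"
  shows "\<exists>l\<in>\<Lambda>. \<forall>t\<in>{s..<r}. (\<forall>q\<in>P. q \<le> s \<or> t < q) \<longrightarrow> x t = x s + l * (t - s)"
proof -
  obtain p l where p: "p \<in> P" "p \<le> s" "l \<in> \<Lambda>"
    and lin: "\<And>t. t \<in> {s..<r} \<Longrightarrow> \<forall>q\<in>P. q \<le> s \<or> t < q \<Longrightarrow> x t = x p + l * (t - p)"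
    using cut_below[OF assms] by blast
  have "\<forall>q\<in>P. q \<le> s \<or> s < q" by auto
  then have xs: "x s = x p + l * (s - p)" using lin[of s] assms(2) by auto
  show ?thesis
  proof (intro bexI[OF _ p(3)] ballI impI)
    fix t assume "t \<in> {s..<r}" "\<forall>q\<in>P. q \<le> s \<or> t < q"
    then have "x t = x p + l * (t - p)" by (rule lin)
    then show "x t = x s + l * (t - s)" using xs by (simp add: algebra_simps)
  qed
qed

lemma cutset_refine:
  assumes P: "cutset x P" and Q: "finite Q" "Q \<subseteq> A \<inter> {0..<r}" "x ` Q \<subseteq> A"
  shows "cutset x (P \<union> Q)"
  unfolding cutset_def
proof (intro conjI ballI)
  fix p assume "p \<in> P \<union> Q"
  then have "p \<in> {0..<r}" using P Q unfolding cutset_def by auto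
  then show "\<exists>l\<in>\<Lambda>. \<forall>t\<in>{p..<r}. (\<forall>q\<in>P \<union> Q. q \<le> p \<or> t < q) \<longrightarrow> x t = x p + l * (t - p)"
    using cut_local[OF P] by blast
qed (use P Q in \<open>auto simp: cutset_def\<close>)

lemma PLF_A:
  assumes "x \<in> PLF r \<Lambda> A" "s \<in> A" "s \<in> {0..<r}"
  shows "x s \<in> A"
proof -
  obtain P where P: "cutset x P" using assms PLF_iff by auto
  obtain p l where p: "p \<in> P" "p \<le> s" "l \<in> \<Lambda>"
    and lin: "\<And>t. t \<in> {s..<r} \<Longrightarrow> \<forall>q\<in>P. q \<le> s \<or> t < q \<Longrightarrow> x t = x p + l * (t - p)"
    using cut_below[OF P assms(3)] by blast
  have "p \<in> A" "x p \<in> A" using P p(1) unfolding cutset_def by auto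
  moreover have "\<forall>q\<in>P. q \<le> s \<or> s < q" by auto
  then have "x s = x p + l * (s + - p)" using lin[of s] assms(3) by auto
  moreover have "x p + l * (s + - p) \<in> A"
    using calculation p(3) assms(2) by (intro A_add A_scale A_uminus) auto
  ultimately show ?thesis by simp
qed

text \<open>Elements of F are strictly increasing on [0, r), being injective continuous maps of an
  interval onto itself (a decreasing one could not be onto).\<close>
lemma PLF_smono_on:
  assumes "x \<in> PLF r \<Lambda> A"
  shows "strict_mono_on {0..<r} x"
proof -
  obtain y where h: "homeomorphism {0..<r} {0..<r} x y" using PLF_homeo[OF assms] by auto
  have c: "continuous_on {0..<r} x" and inj: "inj_on x {0..<r}"
    using h unfolding homeomorphism_def by (auto intro: inj_on_inverseI)
  have iv: "is_interval {0..<r::real}" by (simp add: is_interval_ci is_interval_co)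
  have im: "x ` {0..<r} = {0..<r}" using PLF_image[OF assms] .
  have "\<not> strict_antimono_on {0..<r} x"
  proof
    assume anti: "strict_antimono_on {0..<r} x"
    have x0: "x 0 \<in> {0..<r}" using im r_pos by auto
    have "(x 0 + r) / 2 \<in> {0..<r}" using x0 by auto
    then obtain s where s: "s \<in> {0..<r}" "x s = (x 0 + r) / 2" using im by (metis imageE)
    have "x s \<le> x 0"
    proof (cases "s = 0")
      case False
      then have "0 < s" using s(1) by simp
      then show ?thesis using anti s(1) r_pos unfolding monotone_on_def by fastforce
    qed simp
    then show False using s x0 by auto
  qed
  then show ?thesis using injective_eq_monotone_map[OF iv c] inj by auto
qed

lemma PLF_smono:
  assumes "x \<in> PLF r \<Lambda> A"
  shows "strict_mono x"
proof (rule strict_monoI)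
  fix s t :: real assume st: "s < t"
  have im: "\<And>u. u \<in> {0..<r} \<Longrightarrow> x u \<in> {0..<r}" using PLF_image[OF assms] by auto
  have so: "strict_mono_on {0..<r} x" using PLF_smono_on[OF assms] .
  consider "s \<in> {0..<r}" "t \<in> {0..<r}" | "s \<in> {0..<r}" "t \<notin> {0..<r}"
    | "s \<notin> {0..<r}" "t \<in> {0..<r}" | "s \<notin> {0..<r}" "t \<notin> {0..<r}" by blast
  then show "x s < x t"
  proof cases
    case 1
    then show ?thesis using so st unfolding monotone_on_def by auto
  next
    case 2
    then show ?thesis using im[OF 2(1)] PLF_out[OF assms 2(2)] st by auto
  next
    case 3
    then show ?thesis using im[OF 3(2)] PLF_out[OF assms 3(1)] st by auto
  next
    case 4
    then show ?thesis using PLF_out[OF assms] st by auto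
  qed
qed

lemma PLF_zero:
  assumes "x \<in> PLF r \<Lambda> A"
  shows "x 0 = 0"
proof -
  have "0 \<in> x ` {0..<r}" using PLF_image[OF assms] r_pos by simp
  then obtain s where s: "s \<in> {0..<r}" "x s = 0" by (auto simp del: atLeastLessThan_iff)
  have "x 0 \<in> {0..<r}" using PLF_image[OF assms] r_pos by auto
  then have "\<not> 0 < s" using strict_monoD[OF PLF_smono[OF assms], of 0 s] s by auto
  then show ?thesis using s by simp
qed

lemma PLF_id: "id \<in> PLF r \<Lambda> A"
proof -
  have "homeomorphism {0..<r} {0..<r} id id" using homeomorphism_ident[of "{0..<r}"] by (simp add: id_def)
  moreover have "cutset id {0}" unfolding cutset_def using A_zero r_pos Lam_one by auto
  ultimately show ?thesis unfolding PLF_iff by auto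
qed

text \<open>The inverse of x is affine with the inverse slope from x p up to the next image of a cut
  point; so the images of the cut points of x form a cut set of the inverse.\<close>
lemma PLF_inverse:
  assumes "x \<in> PLF r \<Lambda> A"
  shows "\<exists>x'\<in>PLF r \<Lambda> A. x' \<circ> x = id \<and> x \<circ> x' = id"
proof -
  obtain y where h: "homeomorphism {0..<r} {0..<r} x y" using PLF_homeo[OF assms] by auto
  obtain P where P: "cutset x P" using assms PLF_iff by auto
  define x' where "x' t = (if t \<in> {0..<r} then y t else t)" for t
  have hy: "\<And>t. t \<in> {0..<r} \<Longrightarrow> y (x t) = t" "\<And>t. t \<in> {0..<r} \<Longrightarrow> x (y t) = t"
    "\<And>t. t \<in> {0..<r} \<Longrightarrow> y t \<in> {0..<r}" "\<And>t. t \<in> {0..<r} \<Longrightarrow> x t \<in> {0..<r}"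
    using h unfolding homeomorphism_def by auto
  have out: "\<And>t. t \<notin> {0..<r} \<Longrightarrow> x t = t" using PLF_out[OF assms] .
  have x'x: "x' (x t) = t" for t
  proof (cases "t \<in> {0..<r}")
    case True
    then show ?thesis using hy(1,4)[OF True] by (simp add: x'_def)
  qed (auto simp: x'_def out)
  have xx': "x (x' t) = t" for t by (cases "t \<in> {0..<r}") (auto simp: x'_def hy out)
  have sm: "strict_mono x" using PLF_smono[OF assms] .
  have hom: "homeomorphism {0..<r} {0..<r} x' x"
    by (rule homeomorphism_cong[OF homeomorphism_symD[OF h]]) (auto simp: x'_def)
  have cut: "cutset x' (x ` P)"
    unfolding cutset_def
  proof (intro conjI ballI)
    show "finite (x ` P)" using P by (simp add: cutset_def)
    show "x ` P \<subseteq> A \<inter> {0..<r}" using P hy(4) unfolding cutset_def by auto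
    show "0 \<in> x ` P" using P PLF_zero[OF assms] unfolding cutset_def by force
    show "x' ` x ` P \<subseteq> A" using P x'x unfolding cutset_def by auto
  next
    fix p' assume "p' \<in> x ` P"
    then obtain p where p: "p \<in> P" "p' = x p" by auto
    obtain l where l: "l \<in> \<Lambda>" "\<forall>t\<in>{p..<r}. (\<forall>q\<in>P. q \<le> p \<or> t < q) \<longrightarrow> x t = x p + l * (t - p)"
      using P p(1) unfolding cutset_def by blast
    have lpos: "l > 0" using l(1) Lam_pos by auto
    show "\<exists>l\<in>\<Lambda>. \<forall>t\<in>{p'..<r}. (\<forall>q\<in>x ` P. q \<le> p' \<or> t < q) \<longrightarrow> x' t = x' p' + l * (t - p')"
    proof (intro bexI[OF _ Lam_inv[OF l(1)]] ballI impI)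
      fix t assume t: "t \<in> {p'..<r}" "\<forall>q\<in>x ` P. q \<le> p' \<or> t < q"
      have "p \<in> {0..<r}" using P p(1) unfolding cutset_def by auto
      then have "0 \<le> x p" using hy(4) by simp
      then have "t \<in> {0..<r}" using t p by auto
      then have sr: "x' t \<in> {0..<r}" using hy(3) by (simp add: x'_def)
      have "x p \<le> x (x' t)" using t(1) p(2) xx'[of t] by simp
      then have "p \<le> x' t" using strict_mono_less_eq[OF sm] by simp
      moreover have "q \<le> p \<or> x' t < q" if q: "q \<in> P" for q
      proof -
        have "x q \<le> x p \<or> x (x' t) < x q" using t(2) p(2) q xx'[of t] by auto
        then show ?thesis using strict_mono_less_eq[OF sm] strict_mono_less[OF sm] by simp
      qed
      ultimately have "t = x p + l * (x' t - p)" using l(2) sr xx'[of t] by force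
      then have "x' t = p + (t - x p) / l" using lpos by (simp add: field_simps)
      then show "x' t = x' p' + inverse l * (t - p')"
        using p x'x by (simp add: divide_inverse mult.commute)
    qed
  qed
  have "x' \<in> PLF r \<Lambda> A" unfolding PLF_iff using hom cut by (auto simp: x'_def)
  moreover have "x' \<circ> x = id" "x \<circ> x' = id" using x'x xx' by auto
  ultimately show ?thesis by auto
qed

text \<open>The composite z \<circ> x is affine between consecutive points of the cut set of x and the
  preimages under x of the cut points of z.\<close>
lemma PLF_comp:
  assumes x: "x \<in> PLF r \<Lambda> A" and z: "z \<in> PLF r \<Lambda> A"
  shows "z \<circ> x \<in> PLF r \<Lambda> A"
proof -
  obtain hx where hx: "homeomorphism {0..<r} {0..<r} x hx" using PLF_homeo[OF x] by auto
  obtain hz where hz: "homeomorphism {0..<r} {0..<r} z hz" using PLF_homeo[OF z] by auto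
  obtain Px where Px: "cutset x Px" using x PLF_iff by auto
  obtain Pz where Pz: "cutset z Pz" using z PLF_iff by auto
  obtain x' where x': "x' \<in> PLF r \<Lambda> A" "x \<circ> x' = id" using PLF_inverse[OF x] by auto
  have xx': "\<And>t. x (x' t) = t" using x'(2) by (metis comp_apply id_apply)
  have smx: "strict_mono x" using PLF_smono[OF x] .
  have imx: "\<And>t. t \<in> {0..<r} \<Longrightarrow> x t \<in> {0..<r}" using PLF_image[OF x] by auto
  have imx': "\<And>t. t \<in> {0..<r} \<Longrightarrow> x' t \<in> {0..<r}" using PLF_image[OF x'(1)] by auto
  define Q where "Q = Px \<union> x' ` Pz"
  have "x' q \<in> A \<inter> {0..<r}" if "q \<in> Pz" for q
  proof -
    have "q \<in> A" "q \<in> {0..<r}" using that Pz unfolding cutset_def by auto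
    then show ?thesis using PLF_A[OF x'(1)] imx' by simp
  qed
  then have Qr: "Q \<subseteq> A \<inter> {0..<r}" using Px unfolding Q_def cutset_def by auto
  have cut: "cutset (z \<circ> x) Q"
    unfolding cutset_def
  proof (intro conjI ballI)
    show "finite Q" "0 \<in> Q" using Px Pz unfolding cutset_def Q_def by auto
    show "Q \<subseteq> A \<inter> {0..<r}" by (rule Qr)
    show "(z \<circ> x) ` Q \<subseteq> A"
    proof
      fix u assume "u \<in> (z \<circ> x) ` Q"
      then obtain q where q: "q \<in> Q" "u = z (x q)" by auto
      have "q \<in> A" "q \<in> {0..<r}" using q(1) Qr by auto
      then show "u \<in> A" using q(2) PLF_A[OF x] PLF_A[OF z] imx by simp
    qed
  next
    fix p assume pQ: "p \<in> Q"
    have pr: "p \<in> {0..<r}" using pQ Qr by auto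
    obtain l1 where l1: "l1 \<in> \<Lambda>" "\<forall>t\<in>{p..<r}. (\<forall>q\<in>Px. q \<le> p \<or> t < q) \<longrightarrow> x t = x p + l1 * (t - p)"
      using cut_local[OF Px pr] by blast
    obtain l2 where l2: "l2 \<in> \<Lambda>" "\<forall>t\<in>{x p..<r}. (\<forall>q\<in>Pz. q \<le> x p \<or> t < q) \<longrightarrow> z t = z (x p) + l2 * (t - x p)"
      using cut_local[OF Pz imx[OF pr]] by blast
    show "\<exists>l\<in>\<Lambda>. \<forall>t\<in>{p..<r}. (\<forall>q\<in>Q. q \<le> p \<or> t < q) \<longrightarrow> (z \<circ> x) t = (z \<circ> x) p + l * (t - p)"
    proof (intro bexI[OF _ Lam_mult[OF l2(1) l1(1)]] ballI impI)
      fix t assume t: "t \<in> {p..<r}" "\<forall>q\<in>Q. q \<le> p \<or> t < q"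
      have xt: "x t = x p + l1 * (t - p)" using l1(2) t unfolding Q_def by auto
      have "x p \<le> x t" using t(1) strict_mono_less_eq[OF smx] by simp
      then have xtr: "x t \<in> {x p..<r}" using imx[of t] t pr by auto
      have "\<forall>q\<in>Pz. q \<le> x p \<or> x t < q"
      proof
        fix q assume "q \<in> Pz"
        then have "x' q \<le> p \<or> t < x' q" using t(2) unfolding Q_def by auto
        then have "x (x' q) \<le> x p \<or> x t < x (x' q)"
          using strict_mono_less_eq[OF smx] strict_mono_less[OF smx] by simp
        then show "q \<le> x p \<or> x t < q" using xx'[of q] by simp
      qed
      then have "z (x t) = z (x p) + l2 * (x t - x p)" using l2(2) xtr by blast
      then show "(z \<circ> x) t = (z \<circ> x) p + l2 * l1 * (t - p)" using xt by simp
    qed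
  qed
  have hom: "homeomorphism {0..<r} {0..<r} (z \<circ> x) (hx \<circ> hz)"
    using homeomorphism_compose[OF hx hz] .
  show ?thesis unfolding PLF_iff using hom cut PLF_out[OF x] PLF_out[OF z] by auto
qed

lemma PLF_group: "group G"
proof (rule groupI)
  fix x y assume "x \<in> carrier G" "y \<in> carrier G"
  then show "x \<otimes>\<^bsub>G\<^esub> y \<in> carrier G" by (simp add: PLFgroup_def PLF_comp)
next
  show "\<one>\<^bsub>G\<^esub> \<in> carrier G" by (simp add: PLFgroup_def PLF_id)
next
  fix x y z
  show "x \<otimes>\<^bsub>G\<^esub> y \<otimes>\<^bsub>G\<^esub> z = x \<otimes>\<^bsub>G\<^esub> (y \<otimes>\<^bsub>G\<^esub> z)" by (simp add: PLFgroup_def o_assoc)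
next
  fix x show "\<one>\<^bsub>G\<^esub> \<otimes>\<^bsub>G\<^esub> x = x" by (simp add: PLFgroup_def)
next
  fix x assume "x \<in> carrier G"
  then show "\<exists>y\<in>carrier G. y \<otimes>\<^bsub>G\<^esub> x = \<one>\<^bsub>G\<^esub>"
    using PLF_inverse[of x] by (auto simp: PLFgroup_def)
qed

end

sublocale plf \<subseteq> F: group "PLFgroup r \<Lambda> A" by (rule PLF_group)

context plf
begin

lemma carrier_eq: "carrier G = PLF r \<Lambda> A" by (simp add: PLFgroup_def)
lemma mult_eq: "x \<otimes>\<^bsub>G\<^esub> y = y \<circ> x" by (simp add: PLFgroup_def)
lemma one_eq: "\<one>\<^bsub>G\<^esub> = id" by (simp add: PLFgroup_def)

lemma inv_fun:
  assumes "x \<in> PLF r \<Lambda> A"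
  shows "inv\<^bsub>G\<^esub> x \<in> PLF r \<Lambda> A" "x ((inv\<^bsub>G\<^esub> x) t) = t" "(inv\<^bsub>G\<^esub> x) (x t) = t"
proof -
  have xc: "x \<in> carrier G" using assms carrier_eq by simp
  show "inv\<^bsub>G\<^esub> x \<in> PLF r \<Lambda> A" using F.inv_closed[OF xc] carrier_eq by simp
  have "x \<circ> inv\<^bsub>G\<^esub> x = id" "inv\<^bsub>G\<^esub> x \<circ> x = id"
    using F.l_inv[OF xc] F.r_inv[OF xc] by (simp_all add: mult_eq one_eq)
  then show "x ((inv\<^bsub>G\<^esub> x) t) = t" "(inv\<^bsub>G\<^esub> x) (x t) = t" by (metis comp_apply id_apply)+
qed

lemma PLF_pos:
  assumes "x \<in> PLF r \<Lambda> A" "t \<in> {0<..<r}"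
  shows "x t \<in> {0<..<r}"
proof -
  have "x 0 < x t" using strict_monoD[OF PLF_smono[OF assms(1)], of 0 t] assms(2) by simp
  moreover have "x t \<in> {0..<r}" using PLF_image[OF assms(1)] assms(2) by auto
  ultimately show ?thesis using PLF_zero[OF assms(1)] by auto
qed

lemma piece_homeomorphism:
  assumes c: "c \<in> PLF r \<Lambda> A" and uv: "0 \<le> u" "u < v" "v < r"
    and cu: "c u = u" and cv: "c v = v"
  shows "\<exists>y. homeomorphism {0..<r} {0..<r} (piece u v c) y"
proof -
  obtain c' where c': "c' \<in> PLF r \<Lambda> A" "c' \<circ> c = id" "c \<circ> c' = id" using PLF_inverse[OF c] by auto
  have cc': "\<And>t. c (c' t) = t" and c'c: "\<And>t. c' (c t) = t" using c'(2,3) by (metis comp_apply id_apply)+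
  have c'uv: "c' u = u" "c' v = v" using c'c[of u] c'c[of v] cu cv by simp_all
  have smc: "strict_mono c" and smc': "strict_mono c'" using PLF_smono c c'(1) by auto
  have maps: "piece u v f t \<in> {0..<r}"
    if "strict_mono f" "f u = u" "f v = v" "t \<in> {0..<r}" for f t
    using strict_mono_maps_interval[OF that(1-3), of t] that(4) uv unfolding piece_def by auto
  have cont: "continuous_on {0..<r} (piece u v f)"
    if "f \<in> PLF r \<Lambda> A" "f u = u" "f v = v" for f
    using piece_continuous[OF _ that(2,3)] PLF_homeo[OF that(1)] uv(2)
    unfolding homeomorphism_def by auto
  have "homeomorphism {0..<r} {0..<r} (piece u v c) (piece u v c')"
  proof (rule homeomorphismI)
    show "continuous_on {0..<r} (piece u v c)" "continuous_on {0..<r} (piece u v c')"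
      using cont c c'(1) cu cv c'uv by auto
    show "piece u v c ` {0..<r} \<subseteq> {0..<r}" "piece u v c' ` {0..<r} \<subseteq> {0..<r}"
      using maps[OF smc cu cv] maps[OF smc' c'uv] by auto
    show "\<And>t. piece u v c' (piece u v c t) = t" "\<And>t. piece u v c (piece u v c' t) = t"
      using piece_inverse[OF smc cu cv c'c] piece_inverse[OF smc' c'uv cc'] by auto
  qed
  then show ?thesis by blast
qed

text \<open>Restricting an element of F to an interval [u, v) between two of its fixed points in A
  gives an element of F: the cut points of c together with u and v form a cut set.\<close>
lemma PLF_piece:
  assumes c: "c \<in> PLF r \<Lambda> A" and u: "u \<in> A" "0 \<le> u" and v: "v \<in> A" "v < r" "u < v"
    and cu: "c u = u" and cv: "c v = v"
  shows "piece u v c \<in> PLF r \<Lambda> A"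
proof -
  obtain P where "cutset c P" using c PLF_iff by auto
  then have P: "cutset c (P \<union> {u, v})" using u v cu cv by (intro cutset_refine) auto
  have "cutset (piece u v c) (P \<union> {u, v})"
    unfolding cutset_def
  proof (intro conjI ballI)
    show "finite (P \<union> {u, v})" "P \<union> {u, v} \<subseteq> A \<inter> {0..<r}" "0 \<in> P \<union> {u, v}"
      using P unfolding cutset_def by auto
    show "piece u v c ` (P \<union> {u, v}) \<subseteq> A" using P unfolding cutset_def piece_def by auto
  next
    fix p assume pP: "p \<in> P \<union> {u, v}"
    show "\<exists>l\<in>\<Lambda>. \<forall>t\<in>{p..<r}. (\<forall>q\<in>P \<union> {u, v}. q \<le> p \<or> t < q) \<longrightarrow>
        piece u v c t = piece u v c p + l * (t - p)"
    proof (cases "u \<le> p \<and> p < v")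
      case True
      obtain l where "l \<in> \<Lambda>"
        "\<forall>t\<in>{p..<r}. (\<forall>q\<in>P \<union> {u, v}. q \<le> p \<or> t < q) \<longrightarrow> c t = c p + l * (t - p)"
        using P pP unfolding cutset_def by blast
      then show ?thesis using True unfolding piece_def by (intro bexI[of _ l]) auto
    next
      case False
      have "piece u v c t = t" if "t \<in> {p..<r}" "\<forall>q\<in>P \<union> {u, v}. q \<le> p \<or> t < q" for t
        using that False unfolding piece_def by force
      moreover have "piece u v c p = p" using False unfolding piece_def by auto
      ultimately show ?thesis using Lam_one by (intro bexI[of _ 1]) auto
    qed
  qed
  then show ?thesis unfolding PLF_iff using piece_homeomorphism[OF c u(2) v(3,2) cu cv] u v
    by (auto simp: piece_def)
qed

text \<open>Near 0 every element of F is linear: it fixes 0 and its first affine piece starts there.\<close>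
lemma PLF_linear_near_zero:
  assumes c: "c \<in> PLF r \<Lambda> A"
  obtains m l where "0 < m" "\<And>t. 0 \<le> t \<Longrightarrow> t < m \<Longrightarrow> c t = l * t"
proof -
  obtain P where P: "cutset c P" using c PLF_iff by auto
  define M where "M = insert r {q \<in> P. 0 < q}"
  have M: "finite M" "M \<noteq> {}" using P unfolding M_def cutset_def by auto
  have m_pos: "0 < Min M" using M r_pos unfolding M_def by (subst Min_gr_iff) auto
  obtain l where l: "\<forall>t\<in>{0..<r}. (\<forall>q\<in>P. q \<le> 0 \<or> t < q) \<longrightarrow> c t = c 0 + l * (t - 0)"
    using cut_local[OF P, of 0] r_pos by auto
  show thesis
  proof (rule that[OF m_pos])
    fix t assume t: "0 \<le> t" "t < Min M"
    have "Min M \<le> r" using M unfolding M_def by simp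
    then have "t \<in> {0..<r}" using t by simp
    moreover have "q \<le> 0 \<or> t < q" if "q \<in> P" for q
    proof (cases "0 < q")
      case True
      then have "Min M \<le> q" using M that unfolding M_def by simp
      then show ?thesis using t by simp
    qed simp
    ultimately have "c t = c 0 + l * (t - 0)" using l by blast
    then show "c t = l * t" using PLF_zero[OF c] by simp
  qed
qed

text \<open>Near r every element of F is affine: its last affine piece ends at r.\<close>
lemma PLF_affine_near_end:
  assumes c: "c \<in> PLF r \<Lambda> A"
  obtains p l where "p < r" "\<And>t. p \<le> t \<Longrightarrow> t < r \<Longrightarrow> c t = c p + l * (t - p)"
proof -
  obtain P where P: "cutset c P" using c PLF_iff by auto
  have fin: "finite P" and ne: "P \<noteq> {}" and Pr: "P \<subseteq> {0..<r}" using P unfolding cutset_def by auto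
  have pr: "Max P \<in> {0..<r}" using Max_in[OF fin ne] Pr by auto
  obtain l where l: "\<forall>t\<in>{Max P..<r}. (\<forall>q\<in>P. q \<le> Max P \<or> t < q) \<longrightarrow> c t = c (Max P) + l * (t - Max P)"
    using cut_local[OF P pr] by auto
  show thesis
  proof (rule that[of "Max P" l])
    show "Max P < r" using pr by simp
    fix t assume "Max P \<le> t" "t < r"
    moreover have "\<forall>q\<in>P. q \<le> Max P \<or> t < q" using Max_ge[OF fin] by blast
    ultimately show "c t = c (Max P) + l * (t - Max P)" using l by simp
  qed
qed

lemma PLF_identity_near_zero:
  assumes c: "c \<in> PLF r \<Lambda> A" and fixed: "\<And>\<epsilon>. 0 < \<epsilon> \<Longrightarrow> \<exists>s. 0 < s \<and> s < \<epsilon> \<and> c s = s"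
  obtains \<epsilon> where "0 < \<epsilon>" "\<And>t. t < \<epsilon> \<Longrightarrow> c t = t"
proof -
  obtain m l where m: "0 < m" and lin: "\<And>t. 0 \<le> t \<Longrightarrow> t < m \<Longrightarrow> c t = l * t"
    using PLF_linear_near_zero[OF c] by blast
  obtain s where s: "0 < s" "s < m" "c s = s" using fixed[OF m] by blast
  have "l = 1" using lin[of s] s by simp
  show thesis
  proof (rule that[OF m])
    fix t assume "t < m"
    then show "c t = t" using lin[of t] \<open>l = 1\<close> PLF_out[OF c, of t] by (cases "0 \<le> t") auto
  qed
qed

lemma PLF_identity_near_end:
  assumes c: "c \<in> PLF r \<Lambda> A" and fixed: "\<And>p. p < r \<Longrightarrow> \<exists>s. p < s \<and> s < r \<and> c s = s"
  obtains q where "q < r" "\<And>t. q \<le> t \<Longrightarrow> c t = t"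
proof -
  obtain p l where p: "p < r" and lin: "\<And>t. p \<le> t \<Longrightarrow> t < r \<Longrightarrow> c t = c p + l * (t - p)"
    using PLF_affine_near_end[OF c] by blast
  obtain s1 where s1: "p < s1" "s1 < r" "c s1 = s1" using fixed[OF p] by blast
  obtain s2 where s2: "s1 < s2" "s2 < r" "c s2 = s2" using fixed[OF s1(2)] by blast
  have "s2 - s1 = l * (s2 - s1)"
    using lin[of s1] lin[of s2] s1 s2 by (simp add: algebra_simps)
  then have "l = 1" using s2(1) by simp
  then have "c p = p" using lin[of s1] s1 by simp
  show thesis
  proof (rule that[OF p])
    fix t assume "p \<le> t"
    then show "c t = t" using lin[of t] \<open>l = 1\<close> \<open>c p = p\<close> PLF_out[OF c, of t] by (cases "t < r") auto
  qed
qed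

text \<open>If c fixes all points of an increasing sequence alpha, is the identity below alpha k0 and
  above alpha k1, and all its restrictions to [alpha j, alpha (j+1)) lie in a subgroup H, then
  c lies in H: it is the product of these finitely many restrictions.\<close>
lemma product_of_pieces:
  fixes \<alpha> :: "int \<Rightarrow> real"
  assumes H: "subgroup H G" and c: "c \<in> PLF r \<Lambda> A" and mono: "mono \<alpha>"
    and fixpts: "\<And>j. c (\<alpha> j) = \<alpha> j"
    and pieces: "\<And>j. piece (\<alpha> j) (\<alpha> (j + 1)) c \<in> H"
    and low: "\<And>t. t < \<alpha> k0 \<Longrightarrow> c t = t" and high: "\<And>t. \<alpha> k1 \<le> t \<Longrightarrow> c t = t"
  shows "c \<in> H"
proof -
  define h where "h j = (\<lambda>t. if t < \<alpha> j then c t else t)" for j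
  have step: "h (j + 1) = h j \<otimes>\<^bsub>G\<^esub> piece (\<alpha> j) (\<alpha> (j + 1)) c" for j
  proof -
    have below: "c t < \<alpha> j" if "t < \<alpha> j" for t
      using strict_monoD[OF PLF_smono[OF c] that] fixpts[of j] by simp
    have "\<alpha> j \<le> \<alpha> (j + 1)" using mono by (simp add: monoD)
    then show ?thesis unfolding mult_eq h_def piece_def by (intro ext) (auto dest: below)
  qed
  have partial: "h (k0 + int n) \<in> H" for n
  proof (induction n)
    case 0
    have "h k0 = \<one>\<^bsub>G\<^esub>" unfolding one_eq h_def using low by auto
    then show ?case using subgroup.one_closed[OF H] by simp
  next
    case (Suc n)
    have eq: "k0 + int (Suc n) = k0 + int n + 1" by simp
    show ?case unfolding eq step by (rule subgroup.m_closed[OF H Suc.IH pieces])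
  qed
  have "max k0 k1 = k0 + int (nat (max k0 k1 - k0))" by simp
  then have "h (max k0 k1) \<in> H" using partial by metis
  moreover have "h (max k0 k1) = c"
    using high monoD[OF mono, of k1 "max k0 k1"] unfolding h_def by force
  ultimately show ?thesis by simp
qed

end

section \<open>The centralizer of the conjugates of b\<close>

locale conjugate_family = plf +
  fixes a b d :: "real \<Rightarrow> real" and \<alpha>0 :: real
  assumes a_up: "a \<in> PLF_up r \<Lambda> A" and a_supp: "supp a = {0<..<r}"
    and alpha0: "\<alpha>0 \<in> {0<..<r} \<inter> A"
    and b_up: "b \<in> PLF_up r \<Lambda> A" and b_supp: "supp b = {\<alpha>0<..<a \<alpha>0}"
    and d_in: "d \<in> PLF_on r \<Lambda> A {\<alpha>0<..<a \<alpha>0}"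
    and d_cent: "centralizer G (PLF_on r \<Lambda> A {\<alpha>0<..<a \<alpha>0}) {b} = generate G {d}"
begin

definition g :: "int \<Rightarrow> real \<Rightarrow> real" where "g k = a [^]\<^bsub>G\<^esub> k"
definition ig :: "int \<Rightarrow> real \<Rightarrow> real" where "ig k = inv\<^bsub>G\<^esub> (g k)"
definition \<alpha> :: "int \<Rightarrow> real" where "\<alpha> k = g k \<alpha>0"
definition B :: "int \<Rightarrow> real \<Rightarrow> real" where "B k = ig k \<otimes>\<^bsub>G\<^esub> b \<otimes>\<^bsub>G\<^esub> g k"
definition D :: "int \<Rightarrow> real \<Rightarrow> real" where "D k = ig k \<otimes>\<^bsub>G\<^esub> d \<otimes>\<^bsub>G\<^esub> g k"

lemma a_in: "a \<in> PLF r \<Lambda> A" using a_up unfolding PLF_up_def by auto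
lemma b_in: "b \<in> PLF r \<Lambda> A" using b_up unfolding PLF_up_def by auto
lemma d_PLF: "d \<in> PLF r \<Lambda> A" using d_in unfolding PLF_on_def by auto

lemma g_in: "g k \<in> PLF r \<Lambda> A"
proof -
  have "a \<in> carrier G" using a_in by (simp only: carrier_eq)
  then have "a [^]\<^bsub>G\<^esub> k \<in> carrier G" by (rule F.int_pow_closed)
  then show ?thesis by (simp only: g_def carrier_eq)
qed

lemma g_ig: "g k (ig k t) = t" unfolding ig_def by (rule inv_fun(2)[OF g_in])
lemma ig_g: "ig k (g k t) = t" unfolding ig_def by (rule inv_fun(3)[OF g_in])
lemma g_sm: "strict_mono (g k)" using PLF_smono[OF g_in] .

lemma B_fun: "B k = g k \<circ> b \<circ> ig k" unfolding B_def mult_eq by (simp add: o_assoc)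
lemma D_fun: "D k = g k \<circ> d \<circ> ig k" unfolding D_def mult_eq by (simp add: o_assoc)

lemma B_in: "B k \<in> PLF r \<Lambda> A"
  unfolding B_fun ig_def using PLF_comp[OF inv_fun(1)[OF g_in] PLF_comp[OF b_in g_in]] .
lemma D_in: "D k \<in> PLF r \<Lambda> A"
  unfolding D_fun ig_def using PLF_comp[OF inv_fun(1)[OF g_in] PLF_comp[OF d_PLF g_in]] .

lemma g_succ: "g (k + 1) = a \<circ> g k" "g (k + 1) = g k \<circ> a"
proof -
  have ac: "a \<in> carrier G" using a_in by (simp only: carrier_eq)
  have "a [^]\<^bsub>G\<^esub> (k + 1) = a [^]\<^bsub>G\<^esub> k \<otimes>\<^bsub>G\<^esub> a [^]\<^bsub>G\<^esub> (1::int)"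
    "a [^]\<^bsub>G\<^esub> (1 + k) = a [^]\<^bsub>G\<^esub> (1::int) \<otimes>\<^bsub>G\<^esub> a [^]\<^bsub>G\<^esub> k"
    by (rule F.int_pow_mult[OF ac])+
  then show "g (k + 1) = a \<circ> g k" "g (k + 1) = g k \<circ> a"
    unfolding g_def mult_eq F.int_pow_1[OF ac] by (simp_all add: add.commute)
qed

lemma alpha_suc: "\<alpha> (k + 1) = a (\<alpha> k)" unfolding \<alpha>_def g_succ(1) by simp

lemma alpha_suc': "\<alpha> (k + 1) = g k (a \<alpha>0)" unfolding \<alpha>_def g_succ(2) by simp

lemma alpha_pos: "\<alpha> k \<in> {0<..<r}"
  unfolding \<alpha>_def by (rule PLF_pos[OF g_in]) (use alpha0 in simp)

lemma alpha_A: "\<alpha> k \<in> A"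
  unfolding \<alpha>_def by (rule PLF_A[OF g_in]) (use alpha0 in auto)

lemma a_gt:
  assumes "t \<in> {0<..<r}" shows "t < a t"
proof -
  have "t \<le> a t" using a_up assms unfolding PLF_up_def by auto
  moreover have "t \<in> supp a" using a_supp assms by simp
  then have "a t \<noteq> t" unfolding supp_def by simp
  ultimately show ?thesis by simp
qed

lemma alpha_less: "i < j \<Longrightarrow> \<alpha> i < \<alpha> j"
proof (induction j rule: int_gr_induct)
  case base
  then show ?case using a_gt[OF alpha_pos] alpha_suc by simp
next
  case (step j)
  then show ?case using a_gt[OF alpha_pos[of j]] alpha_suc[of j] by simp
qed

lemma alpha_mono: "mono \<alpha>"
proof (rule monoI)
  fix i j :: int assume "i \<le> j"
  then show "\<alpha> i \<le> \<alpha> j" using alpha_less[of i j] by (cases "i = j") auto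
qed

text \<open>The orbit accumulates at 0: otherwise its infimum would be a point of (0, r) fixed by a.\<close>
lemma alpha_small: assumes "\<epsilon> > 0" shows "\<exists>k. \<alpha> k < \<epsilon>"
proof (rule ccontr)
  assume "\<not> (\<exists>k. \<alpha> k < \<epsilon>)"
  then have ge: "\<And>k. \<epsilon> \<le> \<alpha> k" by (simp add: not_less)
  define L where "L = Inf (range \<alpha>)"
  have bdd: "bdd_below (range \<alpha>)" unfolding bdd_below_def using ge by auto
  have Lle: "\<And>k. L \<le> \<alpha> k" unfolding L_def using bdd by (simp add: cInf_lower)
  have Lge: "\<epsilon> \<le> L" unfolding L_def using ge by (auto intro: cInf_greatest)
  have "L \<in> {0<..<r}" using Lle[of 0] alpha_pos[of 0] Lge assms by auto
  then have "L < a L" by (rule a_gt)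
  then obtain k where k: "\<alpha> k < a L"
    using cInf_less_iff[of "range \<alpha>" "a L"] bdd unfolding L_def by auto
  have "a L \<le> a (\<alpha> (k - 1))"
    using strict_mono_less_eq[OF PLF_smono[OF a_in]] Lle[of "k - 1"] by simp
  also have "a (\<alpha> (k - 1)) = \<alpha> k" using alpha_suc[of "k - 1"] by simp
  finally show False using k by simp
qed

text \<open>The orbit accumulates at r: otherwise its supremum would be a point of (0, r) fixed by a.\<close>
lemma alpha_large: assumes "M < r" shows "\<exists>k. M < \<alpha> k"
proof (rule ccontr)
  assume "\<not> (\<exists>k. M < \<alpha> k)"
  then have le: "\<And>k. \<alpha> k \<le> M" by (simp add: not_less)
  define L where "L = Sup (range \<alpha>)"
  have bdd: "bdd_above (range \<alpha>)" unfolding bdd_above_def using le by auto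
  have Lge: "\<And>k. \<alpha> k \<le> L" unfolding L_def using bdd by (simp add: cSup_upper)
  have Lle: "L \<le> M" unfolding L_def using le by (auto intro: cSup_least)
  have Lr: "L \<in> {0<..<r}" using Lge[of 0] alpha_pos[of 0] Lle assms by auto
  define a' where "a' = inv\<^bsub>G\<^esub> a"
  have aa': "a (a' L) = L" unfolding a'_def using inv_fun(2)[OF a_in] .
  have "a' L \<in> {0<..<r}" unfolding a'_def using PLF_pos[OF inv_fun(1)[OF a_in] Lr] .
  then have "a' L < L" using a_gt aa' by force
  then obtain k where k: "a' L < \<alpha> k"
    using less_cSup_iff[of "range \<alpha>" "a' L"] bdd unfolding L_def by auto
  have "a (a' L) < a (\<alpha> k)" using strict_monoD[OF PLF_smono[OF a_in]] k by blast
  then have "L < \<alpha> (k + 1)" using aa' alpha_suc by simp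
  then show False using Lge[of "k + 1"] by simp
qed

lemma conj_interval: "ig k t \<in> {\<alpha>0<..<a \<alpha>0} \<longleftrightarrow> t \<in> {\<alpha> k<..<\<alpha> (k + 1)}"
proof -
  have "\<alpha>0 < ig k t \<longleftrightarrow> \<alpha> k < t"
    using strict_mono_less[OF g_sm[of k], of \<alpha>0 "ig k t"] by (simp add: \<alpha>_def g_ig)
  moreover have "ig k t < a \<alpha>0 \<longleftrightarrow> t < \<alpha> (k + 1)"
    using strict_mono_less[OF g_sm[of k], of "ig k t" "a \<alpha>0"] by (simp add: alpha_suc' g_ig)
  ultimately show ?thesis by simp
qed

lemma supp_B: "supp (B k) = {\<alpha> k<..<\<alpha> (k + 1)}"
  using supp_conjugate[where h="g k" and h'="ig k" and f=b, OF g_ig ig_g] conj_interval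
  unfolding B_fun b_supp by blast

lemma supp_D: "supp (D k) \<subseteq> {\<alpha> k<..<\<alpha> (k + 1)}"
  using supp_conjugate[where h="g k" and h'="ig k" and f=d, OF g_ig ig_g] conj_interval d_in
  unfolding D_fun PLF_on_def by blast

text \<open>Every D_j commutes with every B_k: for j = k because d commutes with b, for j \<noteq> k because
  the supports are disjoint.\<close>
lemma D_B_commute: "D j \<otimes>\<^bsub>G\<^esub> B k = B k \<otimes>\<^bsub>G\<^esub> D j"
proof (cases "j = k")
  case True
  have "d \<in> centralizer G (PLF_on r \<Lambda> A {\<alpha>0<..<a \<alpha>0}) {b}"
    using d_cent generate.incl[of d "{d}" G] by simp
  then have "d \<otimes>\<^bsub>G\<^esub> b = b \<otimes>\<^bsub>G\<^esub> d" unfolding centralizer_def by auto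
  then show ?thesis unfolding True D_def B_def ig_def
    using F.conj_commute_iff[of "g k" d b] g_in d_PLF b_in carrier_eq by simp
next
  case False
  then have "\<alpha> (j + 1) \<le> \<alpha> k \<or> \<alpha> (k + 1) \<le> \<alpha> j"
    using monoD[OF alpha_mono] by (cases "j < k") auto
  then have "supp (D j) \<inter> supp (B k) = {}" using supp_D[of j] supp_B[of k] by auto
  moreover have "inj (D j)" "inj (B k)" using PLF_smono D_in B_in strict_mono_imp_inj_on by blast+
  ultimately show ?thesis unfolding mult_eq using disjoint_supp_commute by metis
qed

text \<open>An element of F commuting with B_k preserves its support and hence fixes alpha_k.\<close>
lemma commuting_fixes_alpha:
  assumes c: "c \<in> PLF r \<Lambda> A" and cB: "B k \<circ> c = c \<circ> B k"
  shows "c (\<alpha> k) = \<alpha> k"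
proof -
  have "c t \<in> {\<alpha> k<..<\<alpha> (k + 1)} \<longleftrightarrow> t \<in> {\<alpha> k<..<\<alpha> (k + 1)}" for t
    using commuting_preserves_supp[OF strict_mono_imp_inj_on[OF PLF_smono[OF c]] cB]
    unfolding supp_B .
  then show ?thesis
    using invariant_interval_fixes_end[OF PLF_smono[OF c] PLF_smono[OF inv_fun(1)[OF c]]
        inv_fun(2)[OF c] inv_fun(3)[OF c]] alpha_less[of k "k + 1"] by simp
qed

text \<open>The restriction to [alpha_j, alpha_(j+1)) of an element commuting with all B_k lies in
  the group generated by D_j: conjugated by a^j it commutes with b and is supported in
  (alpha_0, alpha_1), so it lies in the group generated by d.\<close>
lemma piece_in_generate:
  assumes c: "c \<in> PLF r \<Lambda> A" and cB: "\<And>k. B k \<circ> c = c \<circ> B k"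
  shows "piece (\<alpha> j) (\<alpha> (j + 1)) c \<in> generate G (range D)"
proof -
  define cj where "cj = piece (\<alpha> j) (\<alpha> (j + 1)) c"
  have fix_alpha: "c (\<alpha> k) = \<alpha> k" for k using commuting_fixes_alpha[OF c cB] .
  have cj_in: "cj \<in> PLF r \<Lambda> A" unfolding cj_def
    using PLF_piece[OF c alpha_A _ alpha_A _ _ fix_alpha fix_alpha] alpha_pos[of j]
      alpha_pos[of "j + 1"] alpha_less[of j "j + 1"] by simp
  have cj_comm: "B j \<circ> cj = cj \<circ> B j" unfolding cj_def
    using piece_commute[OF strict_mono_imp_inj_on[OF PLF_smono[OF B_in]] _ cB] supp_B by simp
  have carr: "g j \<in> carrier G" "cj \<in> carrier G" "b \<in> carrier G" "d \<in> carrier G"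
    using g_in cj_in b_in d_PLF carrier_eq by simp_all
  define e where "e = g j \<otimes>\<^bsub>G\<^esub> cj \<otimes>\<^bsub>G\<^esub> inv\<^bsub>G\<^esub> (g j)"
  have e_in: "e \<in> carrier G" unfolding e_def using carr by simp
  have cj_e: "cj = inv\<^bsub>G\<^esub> (g j) \<otimes>\<^bsub>G\<^esub> e \<otimes>\<^bsub>G\<^esub> g j"
    unfolding e_def using carr by (simp add: F.m_assoc F.inv_cancel_left)
  have "e \<otimes>\<^bsub>G\<^esub> b = b \<otimes>\<^bsub>G\<^esub> e"
    using F.conj_commute_iff[OF carr(1) e_in carr(3)] cj_comm cj_e
    unfolding B_def ig_def mult_eq by simp
  moreover have "supp e \<subseteq> {\<alpha>0<..<a \<alpha>0}"
  proof
    fix t assume "t \<in> supp e"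
    then have "g j t \<in> supp cj"
      using supp_conjugate[where h="ig j" and h'="g j" and f=cj and t=t, OF ig_g g_ig]
      unfolding e_def mult_eq ig_def[symmetric] by (simp add: o_assoc)
    then have "g j t \<in> {\<alpha> j<..<\<alpha> (j + 1)}"
      using supp_piece[of c "\<alpha> j" "\<alpha> (j + 1)", OF fix_alpha] cj_def by auto
    then show "t \<in> {\<alpha>0<..<a \<alpha>0}" using conj_interval[of j "g j t"] ig_g by simp
  qed
  ultimately have "e \<in> generate G {d}"
    using d_cent e_in carrier_eq unfolding centralizer_def PLF_on_def by auto
  then have "cj \<in> generate G {D j}"
    using F.conj_generate[OF carr(1,4)] cj_e unfolding D_def ig_def by simp
  then show ?thesis
    unfolding cj_def using F.mono_generate[of "{D j}" "range D"] by auto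
qed

lemma centralizer_in_generate:
  assumes "c \<in> centralizer G (carrier G) (range B)"
  shows "c \<in> generate G (range D)"
proof -
  have c: "c \<in> PLF r \<Lambda> A" and cB: "\<And>k. B k \<circ> c = c \<circ> B k"
    using assms carrier_eq unfolding centralizer_def mult_eq by auto
  have fix_alpha: "c (\<alpha> k) = \<alpha> k" for k using commuting_fixes_alpha[OF c cB] .
  obtain \<epsilon> where "0 < \<epsilon>" and low: "\<And>t. t < \<epsilon> \<Longrightarrow> c t = t"
    using PLF_identity_near_zero[OF c] alpha_small alpha_pos fix_alpha
    by (metis greaterThanLessThan_iff)
  obtain q where "q < r" and high: "\<And>t. q \<le> t \<Longrightarrow> c t = t"
    using PLF_identity_near_end[OF c] alpha_large alpha_pos fix_alpha
    by (metis greaterThanLessThan_iff)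
  obtain k0 where "\<alpha> k0 < \<epsilon>" using alpha_small[OF \<open>0 < \<epsilon>\<close>] by blast
  obtain k1 where "q < \<alpha> k1" using alpha_large[OF \<open>q < r\<close>] by blast
  have "range D \<subseteq> carrier G" using D_in carrier_eq by auto
  then show ?thesis
    using product_of_pieces[OF F.generate_is_subgroup c alpha_mono fix_alpha
        piece_in_generate[OF c cB], of k0 k1] low high \<open>\<alpha> k0 < \<epsilon>\<close> \<open>q < \<alpha> k1\<close> by simp
qed

theorem centralizer_of_conjugates: "centralizer G (carrier G) (range B) = generate G (range D)"
proof
  have "range B \<subseteq> carrier G" "range D \<subseteq> centralizer G (carrier G) (range B)"
    using B_in D_in D_B_commute carrier_eq unfolding centralizer_def by auto
  then show "generate G (range D) \<subseteq> centralizer G (carrier G) (range B)"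
    using F.generate_subgroup_incl F.centralizer_subgroup by blast
qed (use centralizer_in_generate in blast)

end

theorem lemma4p6:
  fixes r :: real and \<Lambda> A :: "real set" and a b d :: "real \<Rightarrow> real" and \<alpha>0 :: real
  defines "G \<equiv> PLFgroup r \<Lambda> A"
  assumes r_pos: "r > 0"
    and Lam_pos: "\<Lambda> \<subseteq> {0<..}" and Lam_one: "1 \<in> \<Lambda>"
    and Lam_mult: "\<And>l m. l \<in> \<Lambda> \<Longrightarrow> m \<in> \<Lambda> \<Longrightarrow> l * m \<in> \<Lambda>"
    and Lam_inv: "\<And>l. l \<in> \<Lambda> \<Longrightarrow> inverse l \<in> \<Lambda>"
    and Lam_nontriv: "\<Lambda> \<noteq> {1}"
    and A_zero: "0 \<in> A"
    and A_add: "\<And>x y. x \<in> A \<Longrightarrow> y \<in> A \<Longrightarrow> x + y \<in> A"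
    and A_uminus: "\<And>x. x \<in> A \<Longrightarrow> - x \<in> A"
    and r_A: "r \<in> A"
    and A_scale: "\<And>l x. l \<in> \<Lambda> \<Longrightarrow> x \<in> A \<Longrightarrow> l * x \<in> A"
    and a_up: "a \<in> PLF_up r \<Lambda> A" and a_supp: "supp a = {0<..<r}"
    and alpha0: "\<alpha>0 \<in> {0<..<r} \<inter> A"
    and b_up: "b \<in> PLF_up r \<Lambda> A" and b_supp: "supp b = {\<alpha>0<..<a \<alpha>0}"
    and d_in: "d \<in> PLF_on r \<Lambda> A {\<alpha>0<..<a \<alpha>0}"
    and d_cent: "centralizer G (PLF_on r \<Lambda> A {\<alpha>0<..<a \<alpha>0}) {b} = generate G {d}"
  shows "centralizer G (carrier G)
           {inv\<^bsub>G\<^esub> (a [^]\<^bsub>G\<^esub> k) \<otimes>\<^bsub>G\<^esub> b \<otimes>\<^bsub>G\<^esub> (a [^]\<^bsub>G\<^esub> k) | k :: int. True}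
         = generate G {inv\<^bsub>G\<^esub> (a [^]\<^bsub>G\<^esub> k) \<otimes>\<^bsub>G\<^esub> d \<otimes>\<^bsub>G\<^esub> (a [^]\<^bsub>G\<^esub> k) | k :: int. True}"
proof -
  interpret conjugate_family r \<Lambda> A a b d \<alpha>0
    using r_pos Lam_pos Lam_one Lam_mult Lam_inv A_zero A_add A_uminus A_scale a_up a_supp alpha0
      b_up b_supp d_in d_cent unfolding G_def by unfold_locales
  have "{inv\<^bsub>G\<^esub> (a [^]\<^bsub>G\<^esub> k) \<otimes>\<^bsub>G\<^esub> x \<otimes>\<^bsub>G\<^esub> (a [^]\<^bsub>G\<^esub> k) | k :: int. True}
      = range (\<lambda>k. ig k \<otimes>\<^bsub>G\<^esub> x \<otimes>\<^bsub>G\<^esub> g k)" for x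
    unfolding G_def ig_def g_def by auto
  then show ?thesis using centralizer_of_conjugates unfolding B_def[abs_def] D_def[abs_def] G_def
    by simp
qed

end
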